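(* Finite memory strategies are sufficient in non-singleton interval discounted sum games: if $I$ is a real interval containing more than one point, $\lambda\in(0,1)$, and Eve has a strategy ensuring that every consistent play $\pi$ of the game graph $G$ satisfies $DS_\lambda(\pi)\in I$, then she has such a strategy with finite memory.
   Context: A game graph is a tuple $G=(V,V_\exists,E,w,q_0)$ where $(V,E)$ is a finite directed graph in which every vertex has an outgoing edge, $w:E\to\mathbb{Z}$ is an integer edge-weight function, $V_\exists\subseteq V$ are Eve's vertices (the rest are Adam's), and $q_0\in V$ the initial vertex. A play is an infinite path $\pi=v_0v_1\cdots$ with $v_0=q_0$. A strategy for a player maps finite play prefixes ending in one of that player's vertices to a successor vertex; it has finite memory if it can be realized as the output of a finite-state machine reading the play. The discounted sum is $DS_\lambda(\pi)=\sum_{i\ge0}\lambda^i w(v_i,v_{i+1})$. *)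

theory Defs
  imports "HOL-Analysis.Analysis"
begin

text \<open>The weight function is w :: 'v => 'v => int (only its values on
edges matter).\<close>

definition game_graph :: "'v set \<Rightarrow> 'v set \<Rightarrow> ('v \<times> 'v) set \<Rightarrow> 'v \<Rightarrow> bool" where
  "game_graph V VE E q0 \<longleftrightarrow>
     finite V \<and> E \<subseteq> V \<times> V \<and> VE \<subseteq> V \<and> q0 \<in> V \<and>
     (\<forall>v\<in>V. \<exists>u. (v, u) \<in> E)"

definition is_play :: "('v \<times> 'v) set \<Rightarrow> 'v \<Rightarrow> (nat \<Rightarrow> 'v) \<Rightarrow> bool" where
  "is_play E q0 p \<longleftrightarrow> p 0 = q0 \<and> (\<forall>i. (p i, p (Suc i)) \<in> E)"

definition is_prefix :: "('v \<times> 'v) set \<Rightarrow> 'v \<Rightarrow> 'v list \<Rightarrow> bool" where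
  "is_prefix E q0 h \<longleftrightarrow> h \<noteq> [] \<and> hd h = q0 \<and>
     (\<forall>i. Suc i < length h \<longrightarrow> (h ! i, h ! Suc i) \<in> E)"

definition eve_strategy :: "'v set \<Rightarrow> ('v \<times> 'v) set \<Rightarrow> 'v \<Rightarrow> ('v list \<Rightarrow> 'v) \<Rightarrow> bool" where
  "eve_strategy VE E q0 \<sigma> \<longleftrightarrow>
     (\<forall>h. is_prefix E q0 h \<and> last h \<in> VE \<longrightarrow> (last h, \<sigma> h) \<in> E)"

definition play_prefix :: "(nat \<Rightarrow> 'v) \<Rightarrow> nat \<Rightarrow> 'v list" where
  "play_prefix p i = map p [0..<Suc i]"

definition consistent :: "'v set \<Rightarrow> ('v \<times> 'v) set \<Rightarrow> 'v \<Rightarrow> ('v list \<Rightarrow> 'v) \<Rightarrow> (nat \<Rightarrow> 'v) \<Rightarrow> bool" where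
  "consistent VE E q0 \<sigma> p \<longleftrightarrow> is_play E q0 p \<and>
     (\<forall>i. p i \<in> VE \<longrightarrow> p (Suc i) = \<sigma> (play_prefix p i))"

text \<open>Memory states are encoded as natural numbers,
which is no loss of generality for finite memory.\<close>
definition finite_memory :: "'v set \<Rightarrow> ('v \<times> 'v) set \<Rightarrow> 'v \<Rightarrow> ('v list \<Rightarrow> 'v) \<Rightarrow> bool" where
  "finite_memory VE E q0 \<sigma> \<longleftrightarrow>
     (\<exists>(M :: nat set) m0 upd out. finite M \<and> m0 \<in> M \<and> (\<forall>m\<in>M. \<forall>v. upd m v \<in> M) \<and>
        (\<forall>h. is_prefix E q0 h \<and> last h \<in> VE \<longrightarrow> \<sigma> h = out (foldl upd m0 h)))"

definition disc_sum :: "real \<Rightarrow> ('v \<Rightarrow> 'v \<Rightarrow> int) \<Rightarrow> (nat \<Rightarrow> 'v) \<Rightarrow> real" where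
  "disc_sum lam w p = (\<Sum>i. lam ^ i * real_of_int (w (p i) (p (Suc i))))"

end

theory Submission
  imports Defs
begin

text \<open>
  Let C bound the absolute value of all discounted sums, pick a < b in I and K with
  2 C \<lambda>^K < b - a. Fix optimal positional strategies for the two zero-sum games in which Eve
  maximises, resp. minimises, the discounted sum, with values valM and valN. Eve plays her
  given winning strategy \<sigma> for K steps; after the prefix v0 ... vK with discounted sum S she
  switches for good to the maximising strategy if the whole window
  [S + \<lambda>^K valM(vK), S + \<lambda>^K C] of payoffs it can produce lies in I, and to the minimising
  one otherwise. In the first case the payoff lies in that window. In the second case some
  y \<notin> I lies in the window; letting Adam answer \<sigma> with the two positional strategies yields
  \<sigma>-consistent plays, hence payoffs in I, one below y and one above the actual payoff.
  So I lies below y, y > b, and the actual payoff is at least y - 2 C \<lambda>^K > a, hence in I.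
  The new strategy only needs to remember the first K+1 vertices and the current one.
\<close>

section \<open>Plays and play prefixes\<close>

definition is_path :: "('v \<times> 'v) set \<Rightarrow> (nat \<Rightarrow> 'v) \<Rightarrow> bool" where
  "is_path E p \<longleftrightarrow> (\<forall>i. (p i, p (Suc i)) \<in> E)"

definition follows :: "'v set \<Rightarrow> ('v \<Rightarrow> 'v) \<Rightarrow> (nat \<Rightarrow> 'v) \<Rightarrow> bool" where
  "follows U ch p \<longleftrightarrow> (\<forall>i. p i \<in> U \<longrightarrow> p (Suc i) = ch (p i))"

definition prefix_payoff :: "real \<Rightarrow> ('v \<Rightarrow> 'v \<Rightarrow> int) \<Rightarrow> 'v list \<Rightarrow> real" where
  "prefix_payoff lam w h = (\<Sum>i < length h - 1. lam ^ i * real_of_int (w (h ! i) (h ! Suc i)))"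

lemma is_path_suffix: "is_path E p \<Longrightarrow> is_path E (\<lambda>j. p (j + K))"
  by (simp add: is_path_def)

lemma is_play_iff_path: "is_play E q0 p \<longleftrightarrow> p 0 = q0 \<and> is_path E p"
  by (simp add: is_play_def is_path_def)

lemma consistent_is_path: "consistent VE E q0 \<sigma> p \<Longrightarrow> is_path E p"
  by (simp add: consistent_def is_play_iff_path)

lemma follows_suffix: "(\<And>i. K \<le> i \<Longrightarrow> p i \<in> U \<Longrightarrow> p (Suc i) = ch (p i)) \<Longrightarrow> follows U ch (\<lambda>j. p (j + K))"
  by (simp add: follows_def)

lemma length_play_prefix [simp]: "length (play_prefix p i) = Suc i"
  by (simp add: play_prefix_def)

lemma nth_play_prefix [simp]: "j \<le> i \<Longrightarrow> play_prefix p i ! j = p j"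
  by (simp add: play_prefix_def nth_append del: upt_Suc)

lemma last_play_prefix [simp]: "last (play_prefix p i) = p i"
  by (simp add: play_prefix_def)

lemma play_prefix_not_Nil [simp]: "play_prefix p i \<noteq> []"
  by (simp add: play_prefix_def)

lemma hd_play_prefix [simp]: "hd (play_prefix p i) = p 0"
  by (simp add: play_prefix_def upt_conv_Cons del: upt_Suc)

lemma play_prefix_eq_iff: "play_prefix p i = play_prefix q i \<longleftrightarrow> (\<forall>j\<le>i. p j = q j)"
  by (auto simp: list_eq_iff_nth_eq)

lemma take_play_prefix: "K \<le> i \<Longrightarrow> take (Suc K) (play_prefix p i) = play_prefix p K"
  by (simp add: play_prefix_def take_map del: upt_Suc)

lemma is_prefix_play_prefix_iff:
  "is_prefix E q0 (play_prefix p i) \<longleftrightarrow> p 0 = q0 \<and> (\<forall>j<i. (p j, p (Suc j)) \<in> E)"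
  by (auto simp: is_prefix_def)

lemma prefix_payoff_play_prefix:
  "prefix_payoff lam w (play_prefix p K) = (\<Sum>i<K. lam ^ i * real_of_int (w (p i) (p (Suc i))))"
  by (simp add: prefix_payoff_def)

lemma is_prefix_subset:
  assumes "is_prefix E q0 h" and "E \<subseteq> V \<times> V" and "q0 \<in> V"
  shows "set h \<subseteq> V"
proof
  fix x assume "x \<in> set h"
  then obtain j where "j < length h" "h ! j = x" by (metis in_set_conv_nth)
  then show "x \<in> V"
    using assms by (cases j) (auto simp: is_prefix_def hd_conv_nth)
qed

section \<open>Strategy switching and finite memory\<close>

fun extend_play :: "('v list \<Rightarrow> 'v) \<Rightarrow> 'v list \<Rightarrow> nat \<Rightarrow> 'v" where
  "extend_play nx g n = (if n < length g then g ! n else nx (map (extend_play nx g) [0..<n]))"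

declare extend_play.simps [simp del]

lemma extend_play_init: "n < length g \<Longrightarrow> extend_play nx g n = g ! n"
  by (simp add: extend_play.simps)

lemma extend_play_step:
  "length g \<le> Suc i \<Longrightarrow> extend_play nx g (Suc i) = nx (play_prefix (extend_play nx g) i)"
  by (subst extend_play.simps) (simp add: play_prefix_def del: upt_Suc)

lemma exists_consistent_extension:
  assumes \<sigma>: "eve_strategy VE E q0 \<sigma>" and ch: "\<And>v. v \<in> V \<Longrightarrow> (v, ch v) \<in> E"
    and EV: "E \<subseteq> V \<times> V" and q0: "q0 \<in> V"
    and p: "is_play E q0 p" and p_cons: "\<And>i. i < K \<Longrightarrow> p i \<in> VE \<Longrightarrow> p (Suc i) = \<sigma> (play_prefix p i)"
  obtains q where "consistent VE E q0 \<sigma> q" and "play_prefix q K = play_prefix p K"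
    and "follows (- VE) ch (\<lambda>j. q (j + K))"
proof -
  define nx where "nx h = (if last h \<in> VE then \<sigma> h else ch (last h))" for h
  define q where "q = extend_play nx (play_prefix p K)"
  have q_init: "q i = p i" if "i \<le> K" for i
    using that by (simp add: q_def extend_play_init)
  have q_step: "q (Suc i) = nx (play_prefix q i)" if "K \<le> i" for i
    using that by (simp add: q_def extend_play_step)
  have edges: "\<forall>j<i. (q j, q (Suc j)) \<in> E" for i
  proof (induction i)
    case (Suc i)
    have "(q i, q (Suc i)) \<in> E"
    proof (cases "i < K")
      case True
      then show ?thesis
        using p q_init by (simp add: is_play_def)
    next
      case False
      have prefix: "is_prefix E q0 (play_prefix q i)"
        using Suc.IH q_init[of 0] p by (simp add: is_prefix_play_prefix_iff is_play_def)
      then have "q i \<in> V"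
        using is_prefix_subset[OF prefix EV q0] by (metis last_in_set last_play_prefix play_prefix_not_Nil subsetD)
      then show ?thesis
        using \<sigma> prefix q_step[of i] False ch by (auto simp: nx_def eve_strategy_def)
    qed
    then show ?case
      using Suc.IH less_Suc_eq by auto
  qed simp
  have "consistent VE E q0 \<sigma> q"
    unfolding consistent_def is_play_def
  proof (intro conjI allI impI)
    show "q 0 = q0"
      using q_init[of 0] p by (simp add: is_play_def)
    show "(q i, q (Suc i)) \<in> E" for i
      using edges[of "Suc i"] by simp
  next
    fix i
    assume "q i \<in> VE"
    show "q (Suc i) = \<sigma> (play_prefix q i)"
    proof (cases "i < K")
      case True
      then have "play_prefix q i = play_prefix p i"
        by (simp add: play_prefix_eq_iff q_init)
      then show ?thesis
        using True p_cons \<open>q i \<in> VE\<close> q_init by simp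
    next
      case False
      then show ?thesis
        using q_step \<open>q i \<in> VE\<close> by (simp add: nx_def)
    qed
  qed
  moreover have "play_prefix q K = play_prefix p K"
    by (simp add: play_prefix_eq_iff q_init)
  moreover have "follows (- VE) ch (\<lambda>j. q (j + K))"
    using q_step by (intro follows_suffix) (simp add: nx_def)
  ultimately show ?thesis
    using that by blast
qed

definition switch_strategy ::
    "nat \<Rightarrow> ('v list \<Rightarrow> 'v) \<Rightarrow> ('v list \<Rightarrow> bool) \<Rightarrow> ('v \<Rightarrow> 'v) \<Rightarrow> ('v \<Rightarrow> 'v) \<Rightarrow> 'v list \<Rightarrow> 'v" where
  "switch_strategy K \<sigma> safe ch1 ch2 h =
     (if length h \<le> K then \<sigma> h else if safe (take (Suc K) h) then ch1 (last h) else ch2 (last h))"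

lemma eve_strategy_switch_strategy:
  assumes "eve_strategy VE E q0 \<sigma>" and "\<And>v. v \<in> V \<Longrightarrow> (v, ch1 v) \<in> E" "\<And>v. v \<in> V \<Longrightarrow> (v, ch2 v) \<in> E"
    and "E \<subseteq> V \<times> V" and "q0 \<in> V"
  shows "eve_strategy VE E q0 (switch_strategy K \<sigma> safe ch1 ch2)"
  unfolding eve_strategy_def
proof (intro allI impI)
  fix h
  assume h: "is_prefix E q0 h \<and> last h \<in> VE"
  then have "last h \<in> V"
    using is_prefix_subset[OF _ assms(4,5)] by (metis is_prefix_def last_in_set subsetD)
  then show "(last h, switch_strategy K \<sigma> safe ch1 ch2 h) \<in> E"
    using assms(1-3) h by (simp add: switch_strategy_def eve_strategy_def)
qed

lemma consistent_switch_strategyD: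
  assumes "consistent VE E q0 (switch_strategy K \<sigma> safe ch1 ch2) p"
  shows "\<And>i. i < K \<Longrightarrow> p i \<in> VE \<Longrightarrow> p (Suc i) = \<sigma> (play_prefix p i)"
    and "follows VE (if safe (play_prefix p K) then ch1 else ch2) (\<lambda>j. p (j + K))"
proof -
  have move: "p (Suc i) = switch_strategy K \<sigma> safe ch1 ch2 (play_prefix p i)" if "p i \<in> VE" for i
    using assms that by (simp add: consistent_def)
  show "p (Suc i) = \<sigma> (play_prefix p i)" if "i < K" "p i \<in> VE" for i
    using move[OF that(2)] that(1) by (simp add: switch_strategy_def)
  show "follows VE (if safe (play_prefix p K) then ch1 else ch2) (\<lambda>j. p (j + K))"
    using move by (intro follows_suffix) (simp add: switch_strategy_def take_play_prefix)
qed

lemma finite_memoryI: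
  fixes S :: "'m set" and upd :: "'m \<Rightarrow> 'v \<Rightarrow> 'm"
  assumes S: "finite S" "s0 \<in> S" and upd: "\<And>s v. s \<in> S \<Longrightarrow> v \<in> V \<Longrightarrow> upd s v \<in> S"
    and prefix_V: "\<And>h. is_prefix E q0 h \<Longrightarrow> set h \<subseteq> V"
    and out: "\<And>h. is_prefix E q0 h \<Longrightarrow> last h \<in> VE \<Longrightarrow> \<sigma> h = out (foldl upd s0 h)"
  shows "finite_memory VE E q0 \<sigma>"
proof -
  obtain dec where dec: "bij_betw dec {0..<card S} S"
    using ex_bij_betw_nat_finite[OF S(1)] by blast
  define enc where "enc = inv_into {0..<card S} dec"
  have dec_enc: "dec (enc s) = s" if "s \<in> S" for s
    using that dec by (simp add: enc_def bij_betw_inv_into_right)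
  have enc_in: "enc s < card S" if "s \<in> S" for s
    using that dec inv_into_into[of s dec "{0..<card S}"] by (simp add: enc_def bij_betw_def)
  define upd' where "upd' n v = enc (if v \<in> V then upd (dec n) v else s0)" for n v
  have fold: "foldl upd' (enc s) h = enc (foldl upd s h) \<and> foldl upd s h \<in> S"
    if "s \<in> S" "set h \<subseteq> V" for s h
    using that
  proof (induction h arbitrary: s)
    case (Cons v h)
    then have "upd' (enc s) v = enc (upd s v)" "upd s v \<in> S"
      by (simp_all add: upd'_def dec_enc upd)
    then show ?case
      using Cons by simp
  qed simp
  show ?thesis
    unfolding finite_memory_def
  proof (intro exI[of _ "{0..<card S}"] exI[of _ "enc s0"] exI[of _ upd'] exI[of _ "\<lambda>n. out (dec n)"]
      conjI ballI allI impI)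
    show "finite {0..<card S}" "enc s0 \<in> {0..<card S}"
      using enc_in S by simp_all
    show "upd' n v \<in> {0..<card S}" if "n \<in> {0..<card S}" for n v
    proof -
      have "dec n \<in> S"
        by (rule bij_betw_apply[OF dec that])
      then show ?thesis
        using upd S(2) by (simp add: upd'_def enc_in)
    qed
    show "\<sigma> h = out (dec (foldl upd' (enc s0) h))" if "is_prefix E q0 h \<and> last h \<in> VE" for h
    proof -
      have "foldl upd' (enc s0) h = enc (foldl upd s0 h)" "foldl upd s0 h \<in> S"
        using fold[OF S(2) prefix_V] that by simp_all
      then show ?thesis
        using out that dec_enc by simp
    qed
  qed
qed

lemma finite_memory_switch_strategy:
  fixes V :: "'v set"
  assumes "finite V" and "E \<subseteq> V \<times> V" and "q0 \<in> V"
  shows "finite_memory VE E q0 (switch_strategy K \<sigma> safe ch1 ch2)"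
proof -
  define upd where "upd s v = (take (Suc K) (fst s @ [v]), v)" for s :: "'v list \<times> 'v" and v
  have take_take_append: "take n (take n xs @ ys) = take n (xs @ ys)" for n and xs ys :: "'v list"
    by (cases "length xs \<le> n") (simp_all add: min_def)
  have fold: "foldl upd (take (Suc K) xs, x) ys = (take (Suc K) (xs @ ys), last (x # ys))" for xs x ys
  proof (induction ys arbitrary: xs x)
    case (Cons y ys)
    then show ?case
      using take_take_append[of "Suc K" xs "[y]"] Cons.IH[of "xs @ [y]" y] by (simp add: upd_def)
  qed simp
  show ?thesis
  proof (rule finite_memoryI)
    show "finite ({t. set t \<subseteq> V \<and> length t \<le> Suc K} \<times> V)"
      using finite_lists_length_le[OF assms(1)] assms(1) by (rule finite_cartesian_product)
    show "([], q0) \<in> {t. set t \<subseteq> V \<and> length t \<le> Suc K} \<times> V"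
      using assms(3) by simp
    show "upd s v \<in> {t. set t \<subseteq> V \<and> length t \<le> Suc K} \<times> V"
      if "s \<in> {t. set t \<subseteq> V \<and> length t \<le> Suc K} \<times> V" "v \<in> V" for s v
      using that by (auto simp: upd_def dest: in_set_takeD)
    show "set h \<subseteq> V" if "is_prefix E q0 h" for h
      using is_prefix_subset[OF that assms(2,3)] .
    show "switch_strategy K \<sigma> safe ch1 ch2 h
        = (\<lambda>(t, v). if length t \<le> K then \<sigma> t else if safe t then ch1 v else ch2 v) (foldl upd ([], q0) h)"
      if "is_prefix E q0 h" for h
    proof -
      have "h \<noteq> []"
        using that by (simp add: is_prefix_def)
      then show ?thesis
        using fold[of "[]" q0 h] by (simp add: switch_strategy_def)
    qed
  qed
qed

section \<open>Discounted sums and optimal positional strategies\<close>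

locale discounted_game =
  fixes V VE :: "'v set" and E :: "('v \<times> 'v) set" and w :: "'v \<Rightarrow> 'v \<Rightarrow> int" and lam :: real
  assumes finite_V: "finite V" and edges_in_V: "E \<subseteq> V \<times> V"
    and has_successor: "\<And>v. v \<in> V \<Longrightarrow> \<exists>u. (v, u) \<in> E"
    and lam_pos: "0 < lam" and lam_less_1: "lam < 1"
begin

definition weight_bound :: real where
  "weight_bound = (\<Sum>e\<in>E. \<bar>real_of_int (w (fst e) (snd e))\<bar>)"

definition payoff_bound :: real where
  "payoff_bound = weight_bound / (1 - lam)"

lemma finite_E: "finite E"
  using finite_V edges_in_V by (meson finite_SigmaI finite_subset)

lemma abs_weight_le: "(u, v) \<in> E \<Longrightarrow> \<bar>real_of_int (w u v)\<bar> \<le> weight_bound"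
  unfolding weight_bound_def
  using member_le_sum[OF _ _ finite_E, of "(u, v)" "\<lambda>e. \<bar>real_of_int (w (fst e) (snd e))\<bar>"] by auto

lemma payoff_bound_nonneg: "0 \<le> payoff_bound"
  using lam_less_1 by (simp add: payoff_bound_def weight_bound_def sum_nonneg)

lemma weight_bound_add_payoff_bound: "weight_bound + lam * payoff_bound = payoff_bound"
  using lam_less_1 by (simp add: payoff_bound_def field_simps)

lemma is_path_in_V: "is_path E p \<Longrightarrow> p i \<in> V"
  using edges_in_V by (auto simp: is_path_def)

lemma abs_disc_term_le:
  "is_path E p \<Longrightarrow> \<bar>lam ^ i * real_of_int (w (p i) (p (Suc i)))\<bar> \<le> lam ^ i * weight_bound"
  using abs_weight_le lam_pos by (simp add: is_path_def abs_mult mult_left_mono)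

lemma weight_bound_sums: "(\<lambda>i. lam ^ i * weight_bound) sums payoff_bound"
  using sums_mult2[OF geometric_sums, of lam weight_bound] lam_pos lam_less_1
  by (simp add: payoff_bound_def)

lemma summable_abs_disc_terms:
  assumes "is_path E p"
  shows "summable (\<lambda>i. \<bar>lam ^ i * real_of_int (w (p i) (p (Suc i)))\<bar>)"
  using abs_disc_term_le[OF assms] sums_summable[OF weight_bound_sums]
  by (intro summable_rabs_comparison_test) auto

lemma summable_disc_terms:
  "is_path E p \<Longrightarrow> summable (\<lambda>i. lam ^ i * real_of_int (w (p i) (p (Suc i))))"
  by (rule summable_rabs_cancel[OF summable_abs_disc_terms])

lemma abs_disc_sum_le: "is_path E p \<Longrightarrow> \<bar>disc_sum lam w p\<bar> \<le> payoff_bound"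
proof -
  assume p: "is_path E p"
  have "\<bar>disc_sum lam w p\<bar> \<le> (\<Sum>i. \<bar>lam ^ i * real_of_int (w (p i) (p (Suc i)))\<bar>)"
    unfolding disc_sum_def by (rule summable_rabs[OF summable_abs_disc_terms[OF p]])
  also have "\<dots> \<le> (\<Sum>i. lam ^ i * weight_bound)"
    using abs_disc_term_le[OF p] summable_abs_disc_terms[OF p] sums_summable[OF weight_bound_sums]
    by (rule suminf_le)
  finally show ?thesis
    using sums_unique[OF weight_bound_sums] by simp
qed

lemma disc_sum_split:
  assumes "is_path E p"
  shows "disc_sum lam w p = prefix_payoff lam w (play_prefix p K) + lam ^ K * disc_sum lam w (\<lambda>j. p (j + K))"
proof -
  have "disc_sum lam w p = (\<Sum>j. lam ^ (j + K) * real_of_int (w (p (j + K)) (p (Suc (j + K)))))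
      + prefix_payoff lam w (play_prefix p K)"
    unfolding disc_sum_def prefix_payoff_play_prefix
    by (rule suminf_split_initial_segment[OF summable_disc_terms[OF assms]])
  also have "(\<Sum>j. lam ^ (j + K) * real_of_int (w (p (j + K)) (p (Suc (j + K)))))
      = lam ^ K * disc_sum lam w (\<lambda>j. p (j + K))"
    unfolding disc_sum_def
    using suminf_mult[OF summable_disc_terms[OF is_path_suffix[OF assms]], of "lam ^ K"]
    by (simp add: power_add mult_ac)
  finally show ?thesis by simp
qed

lemma disc_sum_potential_sums:
  assumes p: "is_path E p" and f_bounded: "\<And>v. v \<in> V \<Longrightarrow> \<bar>f v\<bar> \<le> D"
  shows "(\<lambda>i. lam ^ i * (real_of_int (w (p i) (p (Suc i))) + lam * f (p (Suc i)) - f (p i)))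
           sums (disc_sum lam w p - f (p 0))"
proof -
  let ?a = "\<lambda>i. lam ^ i * real_of_int (w (p i) (p (Suc i)))"
  have partial: "(\<Sum>i<n. lam ^ i * (real_of_int (w (p i) (p (Suc i))) + lam * f (p (Suc i)) - f (p i)))
      = (\<Sum>i<n. ?a i) + (lam ^ n * f (p n) - f (p 0))" for n
  proof -
    have "(\<Sum>i<n. lam ^ i * (real_of_int (w (p i) (p (Suc i))) + lam * f (p (Suc i)) - f (p i)))
        = (\<Sum>i<n. ?a i + (lam ^ Suc i * f (p (Suc i)) - lam ^ i * f (p i)))"
      by (rule sum.cong) (simp_all add: algebra_simps)
    then show ?thesis
      using sum_lessThan_telescope[of "\<lambda>i. lam ^ i * f (p i)" n]
      by (simp only: sum.distrib power_0 mult_1)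
  qed
  have geometric_zero: "(\<lambda>n. lam ^ n * D) \<longlonglongrightarrow> 0"
    using LIMSEQ_power_zero[of lam] lam_pos lam_less_1 by (intro tendsto_mult_left_zero) auto
  have dominated: "norm (lam ^ n * f (p n)) \<le> lam ^ n * D" for n
  proof -
    have "norm (lam ^ n * f (p n)) = lam ^ n * \<bar>f (p n)\<bar>"
      using lam_pos by (simp add: abs_mult)
    also have "\<dots> \<le> lam ^ n * D"
      using f_bounded[OF is_path_in_V[OF p]] lam_pos by (simp add: mult_left_mono)
    finally show ?thesis .
  qed
  have "(\<lambda>n. lam ^ n * f (p n)) \<longlonglongrightarrow> 0"
    by (rule Lim_null_comparison[OF always_eventually[OF allI[OF dominated]] geometric_zero])
  then have "(\<lambda>n. (\<Sum>i<n. ?a i) + (lam ^ n * f (p n) - f (p 0))) \<longlonglongrightarrow> disc_sum lam w p + (0 - f (p 0))"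
    unfolding disc_sum_def
    by (intro tendsto_intros summable_LIMSEQ[OF summable_disc_terms[OF p]])
  then show ?thesis
    unfolding sums_def partial by (simp only: diff_0 add_uminus_conv_diff)
qed

lemma potential_le_disc_sum:
  assumes "is_path E p" and "\<And>v. v \<in> V \<Longrightarrow> \<bar>f v\<bar> \<le> D"
    and "\<And>i. f (p i) \<le> real_of_int (w (p i) (p (Suc i))) + lam * f (p (Suc i))"
  shows "f (p 0) \<le> disc_sum lam w p"
proof -
  have "0 \<le> disc_sum lam w p - f (p 0)"
    using lam_pos assms(3)
    by (intro sums_le[OF _ sums_zero disc_sum_potential_sums[OF assms(1,2)]]) simp
  then show ?thesis by simp
qed

lemma disc_sum_le_potential:
  assumes "is_path E p" and "\<And>v. v \<in> V \<Longrightarrow> \<bar>f v\<bar> \<le> D"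
    and "\<And>i. real_of_int (w (p i) (p (Suc i))) + lam * f (p (Suc i)) \<le> f (p i)"
  shows "disc_sum lam w p \<le> f (p 0)"
proof -
  have "disc_sum lam w p - f (p 0) \<le> 0"
    using lam_pos assms(3)
    by (intro sums_le[OF _ disc_sum_potential_sums[OF assms(1,2)] sums_zero])
      (simp add: mult_nonneg_nonpos)
  then show ?thesis by simp
qed

definition successors :: "'v \<Rightarrow> 'v set" where
  "successors v = {u. (v, u) \<in> E}"

lemma finite_successors: "finite (successors v)"
proof -
  have "successors v \<subseteq> snd ` E"
    unfolding successors_def by force
  then show ?thesis
    using finite_E finite_subset by blast
qed

lemma successors_nonempty: "v \<in> V \<Longrightarrow> successors v \<noteq> {}"
  using has_successor by (auto simp: successors_def)

lemma successors_subset_V: "successors v \<subseteq> V"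
  using edges_in_V by (auto simp: successors_def)

definition one_step :: "('v \<Rightarrow> real) \<Rightarrow> 'v \<Rightarrow> 'v \<Rightarrow> real" where
  "one_step f v u = real_of_int (w v u) + lam * f u"

definition extremum :: "'v \<Rightarrow> 'a::linorder set \<Rightarrow> 'a" where
  "extremum v = (if v \<in> VE then Max else Min)"

lemma extremum_in: "finite X \<Longrightarrow> X \<noteq> {} \<Longrightarrow> extremum v X \<in> X"
  by (simp add: extremum_def)

lemma mono_extremum_commute:
  "mono g \<Longrightarrow> finite X \<Longrightarrow> X \<noteq> {} \<Longrightarrow> g (extremum v X) = extremum v (g ` X)"
  by (simp add: extremum_def mono_Max_commute mono_Min_commute)

lemma extremum_image_mono:
  assumes "finite S" "S \<noteq> {}" "\<And>u. u \<in> S \<Longrightarrow> F u \<le> G u"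
  shows "extremum v (F ` S) \<le> extremum v (G ` S)"
proof (cases "v \<in> VE")
  case True
  have "F u \<le> Max (G ` S)" if "u \<in> S" for u
    using assms that by (meson Max_ge finite_imageI image_eqI order_trans)
  then show ?thesis
    using True assms by (simp add: extremum_def)
next
  case False
  have "Min (F ` S) \<le> G u" if "u \<in> S" for u
    using assms that by (meson Min_le finite_imageI image_eqI order_trans)
  then show ?thesis
    using False assms by (simp add: extremum_def)
qed

lemma abs_one_step_le:
  assumes "(v, u) \<in> E" and "\<bar>f u\<bar> \<le> payoff_bound"
  shows "\<bar>one_step f v u\<bar> \<le> payoff_bound"
proof -
  have "\<bar>one_step f v u\<bar> \<le> \<bar>real_of_int (w v u)\<bar> + lam * \<bar>f u\<bar>"
    using abs_triangle_ineq[of "real_of_int (w v u)" "lam * f u"] lam_pos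
    by (simp add: one_step_def abs_mult)
  also have "\<dots> \<le> weight_bound + lam * payoff_bound"
    using abs_weight_le[OF assms(1)] assms(2) lam_pos by (intro add_mono mult_left_mono) auto
  finally show ?thesis
    by (simp add: weight_bound_add_payoff_bound)
qed

text \<open>
  Working with extended reals makes the least fixed point available (Knaster-Tarski). The
  truncation at -payoff_bound excludes -\<infinity>, which would otherwise be a fixed point value on
  every cycle; on functions bounded by payoff_bound it has no effect (lemma bellman_real).
\<close>

definition bellman :: "('v \<Rightarrow> ereal) \<Rightarrow> 'v \<Rightarrow> ereal" where
  "bellman f v = (if v \<in> V
     then max (- ereal payoff_bound)
       (extremum v ((\<lambda>u. ereal (real_of_int (w v u)) + ereal lam * f u) ` successors v))
     else 0)"

lemma mono_bellman: "mono bellman"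
proof (rule monoI, rule le_funI)
  fix f g :: "'v \<Rightarrow> ereal" and v
  assume "f \<le> g"
  then have pointwise: "ereal (real_of_int (w v u)) + ereal lam * f u \<le> ereal (real_of_int (w v u)) + ereal lam * g u" for u
    using lam_pos by (intro add_left_mono ereal_mult_left_mono) (auto simp: le_fun_def)
  then have "extremum v ((\<lambda>u. ereal (real_of_int (w v u)) + ereal lam * f u) ` successors v)
      \<le> extremum v ((\<lambda>u. ereal (real_of_int (w v u)) + ereal lam * g u) ` successors v)"
    if "v \<in> V"
    by (intro extremum_image_mono finite_successors successors_nonempty[OF that] pointwise)
  then show "bellman f v \<le> bellman g v"
    by (auto simp: bellman_def le_max_iff_disj)
qed

lemma bellman_cong: "(\<And>u. u \<in> V \<Longrightarrow> f u = g u) \<Longrightarrow> bellman f v = bellman g v"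
proof -
  assume "\<And>u. u \<in> V \<Longrightarrow> f u = g u"
  then have "\<And>u. u \<in> successors v \<Longrightarrow> f u = g u"
    using successors_subset_V by blast
  then have "(\<lambda>u. ereal (real_of_int (w v u)) + ereal lam * f u) ` successors v
      = (\<lambda>u. ereal (real_of_int (w v u)) + ereal lam * g u) ` successors v"
    by (intro image_cong) auto
  then show ?thesis
    by (simp add: bellman_def)
qed

lemma bellman_real:
  assumes v: "v \<in> V" and f_bounded: "\<And>u. u \<in> V \<Longrightarrow> \<bar>f u\<bar> \<le> payoff_bound"
  shows "bellman (\<lambda>u. ereal (f u)) v = ereal (extremum v (one_step f v ` successors v))"
proof -
  let ?X = "one_step f v ` successors v"
  have X: "finite ?X" "?X \<noteq> {}"
    using finite_successors successors_nonempty[OF v] by auto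
  have "extremum v ?X \<in> ?X"
    by (rule extremum_in[OF X])
  then have lower: "- payoff_bound \<le> extremum v ?X"
    using abs_one_step_le f_bounded successors_subset_V by (fastforce simp: successors_def)
  have "(\<lambda>u. ereal (real_of_int (w v u)) + ereal lam * ereal (f u)) ` successors v = ereal ` ?X"
    by (auto simp: one_step_def image_image)
  moreover have "extremum v (ereal ` ?X) = ereal (extremum v ?X)"
    using mono_extremum_commute[OF _ X, of ereal] by (simp add: mono_def)
  ultimately show ?thesis
    using lower v by (simp add: bellman_def)
qed

definition bellman_solution :: "('v \<Rightarrow> real) \<Rightarrow> bool" where
  "bellman_solution val \<longleftrightarrow>
     (\<forall>v\<in>V. \<bar>val v\<bar> \<le> payoff_bound \<and> val v = extremum v (one_step val v ` successors v))"

lemma exists_bellman_solution: "\<exists>val. bellman_solution val"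
proof -
  define g where "g = lfp bellman"
  have g_fixpoint: "bellman g = g"
    unfolding g_def by (rule lfp_fixpoint[OF mono_bellman])
  have "bellman (\<lambda>_. ereal payoff_bound) \<le> (\<lambda>_. ereal payoff_bound)"
  proof (rule le_funI)
    fix v
    show "bellman (\<lambda>_. ereal payoff_bound) v \<le> ereal payoff_bound"
    proof (cases "v \<in> V")
      case True
      let ?X = "one_step (\<lambda>_. payoff_bound) v ` successors v"
      have "extremum v ?X \<in> ?X"
        using finite_successors successors_nonempty[OF True] by (intro extremum_in) auto
      then obtain u where "(v, u) \<in> E" "extremum v ?X = one_step (\<lambda>_. payoff_bound) v u"
        by (auto simp: successors_def)
      then have "extremum v ?X \<le> payoff_bound"
        using abs_one_step_le[of v u "\<lambda>_. payoff_bound"] payoff_bound_nonneg by simp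
      then show ?thesis
        using bellman_real[OF True, of "\<lambda>_. payoff_bound"] payoff_bound_nonneg by simp
    qed (simp add: bellman_def payoff_bound_nonneg)
  qed
  then have upper: "g v \<le> ereal payoff_bound" for v
    unfolding g_def by (metis lfp_lowerbound le_fun_def)
  have lower: "- ereal payoff_bound \<le> g v" if "v \<in> V" for v
    using that by (subst g_fixpoint[symmetric]) (simp add: bellman_def)
  define val where "val v = real_of_ereal (g v)" for v
  have g_val: "g v = ereal (val v)" if "v \<in> V" for v
    using upper[of v] lower[OF that] by (cases "g v") (auto simp: val_def)
  have val_bounded: "\<bar>val v\<bar> \<le> payoff_bound" if "v \<in> V" for v
    using upper[of v] lower[OF that] g_val[OF that] by auto
  have val_eq: "val v = extremum v (one_step val v ` successors v)" if v: "v \<in> V" for v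
  proof -
    have "ereal (val v) = bellman g v"
      using g_val[OF v] g_fixpoint by simp
    also have "\<dots> = bellman (\<lambda>u. ereal (val u)) v"
      using g_val by (rule bellman_cong)
    also have "\<dots> = ereal (extremum v (one_step val v ` successors v))"
      by (rule bellman_real[OF v val_bounded])
    finally show ?thesis by simp
  qed
  show ?thesis
    unfolding bellman_solution_def using val_bounded val_eq by blast
qed

lemma bellman_solution_attained:
  assumes "bellman_solution val" and "v \<in> V"
  shows "\<exists>u. (v, u) \<in> E \<and> val v = one_step val v u"
proof -
  have "extremum v (one_step val v ` successors v) \<in> one_step val v ` successors v"
    using finite_successors successors_nonempty[OF assms(2)] by (intro extremum_in) auto
  then obtain u where "(v, u) \<in> E" "extremum v (one_step val v ` successors v) = one_step val v u"
    by (auto simp: successors_def)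
  then show ?thesis
    using assms by (auto simp: bellman_solution_def)
qed

lemma bellman_solution_eve:
  assumes "bellman_solution val" and "v \<in> VE" and "(v, u) \<in> E"
  shows "one_step val v u \<le> val v"
proof -
  have "one_step val v u \<le> Max (one_step val v ` successors v)"
    using finite_successors assms(3) by (intro Max_ge) (auto simp: successors_def)
  also have "\<dots> = val v"
    using assms edges_in_V by (auto simp: bellman_solution_def extremum_def)
  finally show ?thesis .
qed

lemma bellman_solution_adam:
  assumes "bellman_solution val" and "v \<notin> VE" and "(v, u) \<in> E"
  shows "val v \<le> one_step val v u"
proof -
  have "val v = Min (one_step val v ` successors v)"
    using assms edges_in_V by (auto simp: bellman_solution_def extremum_def)
  also have "\<dots> \<le> one_step val v u"
    using finite_successors assms(3) by (intro Min_le) (auto simp: successors_def)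
  finally show ?thesis .
qed

definition optimal_positional :: "'v set \<Rightarrow> ('v \<Rightarrow> real) \<Rightarrow> ('v \<Rightarrow> 'v) \<Rightarrow> bool" where
  "optimal_positional U val ch \<longleftrightarrow> (\<forall>v\<in>V. (v, ch v) \<in> E) \<and>
     (\<forall>p. is_path E p \<longrightarrow> follows U ch p \<longrightarrow> val (p 0) \<le> disc_sum lam w p) \<and>
     (\<forall>p. is_path E p \<longrightarrow> follows (- U) ch p \<longrightarrow> disc_sum lam w p \<le> val (p 0))"

lemma optimal_positional_edge: "optimal_positional U val ch \<Longrightarrow> v \<in> V \<Longrightarrow> (v, ch v) \<in> E"
  by (simp add: optimal_positional_def)

lemma optimal_positional_lower:
  "optimal_positional U val ch \<Longrightarrow> is_path E p \<Longrightarrow> follows U ch p \<Longrightarrow> val (p 0) \<le> disc_sum lam w p"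
  by (simp add: optimal_positional_def)

lemma optimal_positional_upper:
  "optimal_positional U val ch \<Longrightarrow> is_path E p \<Longrightarrow> follows (- U) ch p \<Longrightarrow> disc_sum lam w p \<le> val (p 0)"
  by (simp add: optimal_positional_def)

theorem exists_optimal_positional_VE: "\<exists>val ch. optimal_positional VE val ch"
proof -
  obtain val where val: "bellman_solution val"
    using exists_bellman_solution by blast
  then have bounded: "\<And>v. v \<in> V \<Longrightarrow> \<bar>val v\<bar> \<le> payoff_bound"
    unfolding bellman_solution_def by blast
  define ch where "ch v = (SOME u. (v, u) \<in> E \<and> val v = one_step val v u)" for v
  have ch: "(v, ch v) \<in> E \<and> val v = one_step val v (ch v)" if "v \<in> V" for v
    unfolding ch_def using bellman_solution_attained[OF val that] by (rule someI_ex)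
  have "val (p 0) \<le> disc_sum lam w p" if p: "is_path E p" and "follows VE ch p" for p
  proof (rule potential_le_disc_sum[OF p bounded])
    fix i
    show "val (p i) \<le> real_of_int (w (p i) (p (Suc i))) + lam * val (p (Suc i))"
    proof (cases "p i \<in> VE")
      case True
      then show ?thesis
        using \<open>follows VE ch p\<close> ch[OF is_path_in_V[OF p, of i]] by (simp add: follows_def one_step_def)
    next
      case False
      then show ?thesis
        using bellman_solution_adam[OF val False, of "p (Suc i)"] p by (simp add: is_path_def one_step_def)
    qed
  qed
  moreover have "disc_sum lam w p \<le> val (p 0)" if p: "is_path E p" and "follows (- VE) ch p" for p
  proof (rule disc_sum_le_potential[OF p bounded])
    fix i
    show "real_of_int (w (p i) (p (Suc i))) + lam * val (p (Suc i)) \<le> val (p i)"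
    proof (cases "p i \<in> VE")
      case True
      then show ?thesis
        using bellman_solution_eve[OF val True, of "p (Suc i)"] p by (simp add: is_path_def one_step_def)
    next
      case False
      then show ?thesis
        using \<open>follows (- VE) ch p\<close> ch[OF is_path_in_V[OF p, of i]] by (simp add: follows_def one_step_def)
    qed
  qed
  ultimately show ?thesis
    using ch unfolding optimal_positional_def by blast
qed

text \<open>Nothing in the locale depends on VE, so any U may play Eve's role; U = -VE lets Eve minimise.\<close>

corollary exists_optimal_positional: "\<exists>val ch. optimal_positional U val ch"
proof -
  interpret game_U: discounted_game V U E w lam
    using discounted_game_axioms unfolding discounted_game_def .
  show ?thesis
    by (rule game_U.exists_optimal_positional_VE)
qed

end

section \<open>Interval objectives\<close>

lemma exists_mult_power_less:
  fixes c x \<epsilon> :: real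
  assumes "0 < \<epsilon>" and "0 \<le> c" and "0 \<le> x" and "x < 1"
  obtains n where "c * x ^ n < \<epsilon>"
proof -
  obtain n where n: "x ^ n < \<epsilon> / (c + 1)"
    using real_arch_pow_inv[of "\<epsilon> / (c + 1)" x] assms by auto
  have "c * x ^ n \<le> (c + 1) * x ^ n"
    using assms(3) by (simp add: distrib_right)
  also have "\<dots> < \<epsilon>"
    using n assms(2) by (simp add: pos_less_divide_eq mult.commute)
  finally show ?thesis
    using that by blast
qed

lemma interval_mem_squeeze:
  fixes I :: "real set"
  assumes I: "is_interval I" and "a \<in> I" "b \<in> I" "x \<in> I" "z \<in> I"
    and "x \<le> y" "y \<notin> I" and "y - (b - a) < d" "d \<le> z"
  shows "d \<in> I"
proof -
  have "b < y"
    using assms(3,4,6,7) I unfolding is_interval_1 by (meson linorder_not_le)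
  then have "a \<le> d"
    using assms(8) by linarith
  then show ?thesis
    using assms(2,5,9) I unfolding is_interval_1 by blast
qed

locale interval_game = discounted_game V VE E w lam
  for V VE :: "'v set" and E w lam +
  fixes q0 :: 'v and I :: "real set" and \<sigma> :: "'v list \<Rightarrow> 'v"
  assumes q0_in_V: "q0 \<in> V" and is_interval_I: "is_interval I"
    and eve_strategy_\<sigma>: "eve_strategy VE E q0 \<sigma>"
    and \<sigma>_wins: "\<And>p. consistent VE E q0 \<sigma> p \<Longrightarrow> disc_sum lam w p \<in> I"
begin

lemma exists_winning_payoff_below:
  assumes opt: "optimal_positional VE val ch"
    and p: "is_play E q0 p" and p_cons: "\<And>i. i < K \<Longrightarrow> p i \<in> VE \<Longrightarrow> p (Suc i) = \<sigma> (play_prefix p i)"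
  obtains x where "x \<in> I" and "x \<le> prefix_payoff lam w (play_prefix p K) + lam ^ K * val (p K)"
proof -
  obtain q where q: "consistent VE E q0 \<sigma> q" and same: "play_prefix q K = play_prefix p K"
    and adam: "follows (- VE) ch (\<lambda>j. q (j + K))"
    using exists_consistent_extension[OF eve_strategy_\<sigma> optimal_positional_edge[OF opt] edges_in_V q0_in_V p p_cons]
    by blast
  have path: "is_path E q"
    using q by (rule consistent_is_path)
  have "q K = p K"
    using same by (simp add: play_prefix_eq_iff)
  have "disc_sum lam w (\<lambda>j. q (j + K)) \<le> val (p K)"
    using optimal_positional_upper[OF opt is_path_suffix[OF path] adam] \<open>q K = p K\<close> by simp
  then have "disc_sum lam w q \<le> prefix_payoff lam w (play_prefix p K) + lam ^ K * val (p K)"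
    using disc_sum_split[OF path, of K] same lam_pos by (simp add: mult_left_mono)
  then show ?thesis
    using that \<sigma>_wins[OF q] by blast
qed

lemma exists_winning_payoff_above:
  assumes opt: "optimal_positional (- VE) val ch"
    and p: "is_play E q0 p" and p_cons: "\<And>i. i < K \<Longrightarrow> p i \<in> VE \<Longrightarrow> p (Suc i) = \<sigma> (play_prefix p i)"
  obtains z where "z \<in> I" and "prefix_payoff lam w (play_prefix p K) + lam ^ K * val (p K) \<le> z"
proof -
  obtain q where q: "consistent VE E q0 \<sigma> q" and same: "play_prefix q K = play_prefix p K"
    and adam: "follows (- VE) ch (\<lambda>j. q (j + K))"
    using exists_consistent_extension[OF eve_strategy_\<sigma> optimal_positional_edge[OF opt] edges_in_V q0_in_V p p_cons]
    by blast
  have path: "is_path E q"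
    using q by (rule consistent_is_path)
  have "q K = p K"
    using same by (simp add: play_prefix_eq_iff)
  have "val (p K) \<le> disc_sum lam w (\<lambda>j. q (j + K))"
    using optimal_positional_lower[OF opt is_path_suffix[OF path] adam] \<open>q K = p K\<close> by simp
  then have "prefix_payoff lam w (play_prefix p K) + lam ^ K * val (p K) \<le> disc_sum lam w q"
    using disc_sum_split[OF path, of K] same lam_pos by (simp add: mult_left_mono)
  then show ?thesis
    using that \<sigma>_wins[OF q] by blast
qed

lemma switch_strategy_payoff_bounds:
  assumes M: "optimal_positional VE valM chM" and N: "optimal_positional (- VE) valN chN"
    and p: "consistent VE E q0 (switch_strategy K \<sigma> safe chM chN) p"
  defines "S \<equiv> prefix_payoff lam w (play_prefix p K)"
  shows "\<bar>disc_sum lam w p - S\<bar> \<le> lam ^ K * payoff_bound"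
    and "safe (play_prefix p K) \<Longrightarrow> S + lam ^ K * valM (p K) \<le> disc_sum lam w p"
    and "\<not> safe (play_prefix p K) \<Longrightarrow> disc_sum lam w p \<le> S + lam ^ K * valN (p K)"
proof -
  have path: "is_path E p"
    using p by (rule consistent_is_path)
  note after = consistent_switch_strategyD(2)[OF p]
  define t where "t = disc_sum lam w (\<lambda>j. p (j + K))"
  have split: "disc_sum lam w p = S + lam ^ K * t"
    unfolding S_def t_def by (rule disc_sum_split[OF path])
  have lam_K: "0 < lam ^ K"
    using lam_pos by simp
  have "\<bar>t\<bar> \<le> payoff_bound"
    unfolding t_def by (rule abs_disc_sum_le[OF is_path_suffix[OF path]])
  then show "\<bar>disc_sum lam w p - S\<bar> \<le> lam ^ K * payoff_bound"
    using split lam_K by (simp add: abs_mult mult_left_mono)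
  show "S + lam ^ K * valM (p K) \<le> disc_sum lam w p" if "safe (play_prefix p K)"
  proof -
    have "valM (p K) \<le> t"
      using optimal_positional_lower[OF M is_path_suffix[OF path]] after that by (simp add: t_def)
    then show ?thesis
      using split lam_K by (simp add: mult_left_mono)
  qed
  show "disc_sum lam w p \<le> S + lam ^ K * valN (p K)" if "\<not> safe (play_prefix p K)"
  proof -
    have "t \<le> valN (p K)"
      using optimal_positional_upper[OF N is_path_suffix[OF path]] after that by (simp add: t_def)
    then show ?thesis
      using split lam_K by (simp add: mult_left_mono)
  qed
qed

definition safe_prefix :: "('v \<Rightarrow> real) \<Rightarrow> nat \<Rightarrow> 'v list \<Rightarrow> bool" where
  "safe_prefix val K g \<longleftrightarrow>
     {prefix_payoff lam w g + lam ^ K * val (last g) .. prefix_payoff lam w g + lam ^ K * payoff_bound} \<subseteq> I"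

lemma switch_strategy_wins:
  assumes M: "optimal_positional VE valM chM" and N: "optimal_positional (- VE) valN chN"
    and a: "a \<in> I" and b: "b \<in> I" and K: "2 * lam ^ K * payoff_bound < b - a"
    and p: "consistent VE E q0 (switch_strategy K \<sigma> (safe_prefix valM K) chM chN) p"
  shows "disc_sum lam w p \<in> I"
proof -
  have play: "is_play E q0 p"
    using p by (simp add: consistent_def)
  note before = consistent_switch_strategyD(1)[OF p]
  note bounds = switch_strategy_payoff_bounds[OF M N p]
  define S where "S = prefix_payoff lam w (play_prefix p K)"
  show ?thesis
  proof (cases "safe_prefix valM K (play_prefix p K)")
    case True
    then have "disc_sum lam w p \<in> {S + lam ^ K * valM (p K) .. S + lam ^ K * payoff_bound}"
      using bounds(1,2) unfolding S_def by auto
    then show ?thesis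
      using True by (auto simp: safe_prefix_def S_def)
  next
    case False
    then obtain y where y: "y \<notin> I" "S + lam ^ K * valM (p K) \<le> y" "y \<le> S + lam ^ K * payoff_bound"
      unfolding safe_prefix_def S_def last_play_prefix subset_iff atLeastAtMost_iff by blast
    obtain x where x: "x \<in> I" "x \<le> S + lam ^ K * valM (p K)"
      using exists_winning_payoff_below[OF M play before] unfolding S_def by blast
    obtain z where z: "z \<in> I" "S + lam ^ K * valN (p K) \<le> z"
      using exists_winning_payoff_above[OF N play before] unfolding S_def by blast
    have "x \<le> y"
      using x(2) y(2) by linarith
    moreover have "y - (b - a) < disc_sum lam w p"
      using bounds(1) y(3) K unfolding S_def by linarith
    moreover have "disc_sum lam w p \<le> z"
      using bounds(3)[OF False] z(2) unfolding S_def by linarith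
    ultimately show ?thesis
      by (rule interval_mem_squeeze[OF is_interval_I a b x(1) z(1) _ y(1)])
  qed
qed

theorem exists_finite_memory_winning_strategy:
  assumes "a \<in> I" and "b \<in> I" and "a < b"
  shows "\<exists>\<sigma>'. eve_strategy VE E q0 \<sigma>' \<and> finite_memory VE E q0 \<sigma>' \<and>
           (\<forall>p. consistent VE E q0 \<sigma>' p \<longrightarrow> disc_sum lam w p \<in> I)"
proof -
  obtain valM chM where M: "optimal_positional VE valM chM"
    using exists_optimal_positional by blast
  obtain valN chN where N: "optimal_positional (- VE) valN chN"
    using exists_optimal_positional by blast
  obtain K where "2 * payoff_bound * lam ^ K < b - a"
    using exists_mult_power_less[of "b - a" "2 * payoff_bound" lam] assms(3) payoff_bound_nonneg lam_pos lam_less_1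
    by auto
  then have K: "2 * lam ^ K * payoff_bound < b - a"
    by (simp add: mult_ac)
  show ?thesis
    using eve_strategy_switch_strategy[OF eve_strategy_\<sigma> optimal_positional_edge[OF M]
        optimal_positional_edge[OF N] edges_in_V q0_in_V]
      finite_memory_switch_strategy[OF finite_V edges_in_V q0_in_V]
      switch_strategy_wins[OF M N assms(1,2) K]
    by blast
qed

end

theorem mainTheorem9:
  fixes V VE :: "'v set" and E :: "('v \<times> 'v) set" and w :: "'v \<Rightarrow> 'v \<Rightarrow> int"
    and q0 :: 'v and I :: "real set" and lam :: real
  assumes "game_graph V VE E q0"
    and "is_interval I" and "\<exists>x\<in>I. \<exists>y\<in>I. x \<noteq> y"
    and "0 < lam" and "lam < 1"
    and "\<exists>\<sigma>. eve_strategy VE E q0 \<sigma> \<and>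
           (\<forall>p. consistent VE E q0 \<sigma> p \<longrightarrow> disc_sum lam w p \<in> I)"
  shows "\<exists>\<sigma>. eve_strategy VE E q0 \<sigma> \<and> finite_memory VE E q0 \<sigma> \<and>
           (\<forall>p. consistent VE E q0 \<sigma> p \<longrightarrow> disc_sum lam w p \<in> I)"
proof -
  obtain \<sigma> where \<sigma>: "eve_strategy VE E q0 \<sigma>" "\<forall>p. consistent VE E q0 \<sigma> p \<longrightarrow> disc_sum lam w p \<in> I"
    using assms(6) by blast
  interpret interval_game V VE E w lam q0 I \<sigma>
    using assms(1,2,4,5) \<sigma> by unfold_locales (auto simp: game_graph_def)
  obtain a b where "a \<in> I" "b \<in> I" "a < b"
    using assms(3) by (metis linorder_neqE_linordered_idom)
  then show ?thesis
    by (rule exists_finite_memory_winning_strategy)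
qed

end
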